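(* Let $0\le\ell\le r$. The prime ideals $[I_0,\dots,I_\ell]$ of $\Omega_{H_\ell}$ with $I_0=0$ are exactly the $\ell+1$ ideals $$0\subsetneq\mathcal L(0)\subsetneq\mathcal L^2(0)\subsetneq\cdots\subsetneq\mathcal L^\ell(0),$$ where, for $0\le k\le\ell$, $\mathcal L^k(0)$ is the ideal of $\Omega_{H_\ell}$ obtained by applying $\mathcal L$ $k$ times to the zero ideal $[0,\dots,0]$ of $\Omega_{H_{\ell-k}}$.
   Context: Fix a prime $p$ and an integer $r\ge0$. For $0\le k\le r$ let $R_k$ be the commutative ring which is free as a $\mathbb{Z}$-module with basis $X_{k,0},\dots,X_{k,k}$ and multiplication $X_{k,i}X_{k,j}=p^{k-\max(i,j)}X_{k,\min(i,j)}$; thus $X_{k,k}=1$, and an integer $n$ is identified with $nX_{k,k}$. For $0\le k\le\ell\le r$ define: the additive map $\mathrm{ind}^\ell_k:R_k\to R_\ell$, $X_{k,i}\mapsto X_{\ell,i}$; the ring homomorphism $\mathrm{res}^\ell_k:R_\ell\to R_k$, $\mathrm{res}^\ell_k(X_{\ell,i})=p^{\ell-k}X_{k,i}$ if $i\le k$ and $=p^{\ell-i}$ if $i\ge k$; and the multiplicative map $\mathrm{jnd}^\ell_k:R_k\to R_\ell$, $$\mathrm{jnd}^\ell_k\Big(\sum_{i=0}^k m_iX_{k,i}\Big)=m_kX_{\ell,\ell}+\sum_{k\le i<\ell}\frac{m_k^{p^{\ell-i}}-m_k^{p^{\ell-i-1}}}{p^{\ell-i}}X_{\ell,i}+\sum_{0\le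 i<k}\frac{(\sum_{s=i}^k m_sp^{k-s})^{p^{\ell-k}}-(\sum_{s=i+1}^k m_sp^{k-s})^{p^{\ell-k}}}{p^{\ell-i}}X_{\ell,i}$$ ($m_i\in\mathbb{Z}$). For $k=\ell$ these maps are the identity. These data form the Burnside Tambara functor on $\mathbb{Z}/p^r\mathbb{Z}$; keeping indices $\le n$ gives $\Omega_{H_n}$. An ideal of $\Omega_{H_n}$ is a sequence $[I_0,\dots,I_n]$ of ideals $I_k\subseteq R_k$ such that for every $1\le k\le n$: $\mathrm{ind}^k_{k-1}(I_{k-1})\subseteq I_k$, $\mathrm{res}^k_{k-1}(I_k)\subseteq I_{k-1}$, $\mathrm{jnd}^k_{k-1}(I_{k-1})\subseteq I_k$; inclusion is componentwise. It is proper if $I_0\ne R_0$. A proper ideal is prime if for all $0\le\ell'\le k\le n$, $a\in R_k$, $b\in R_{\ell'}$: whenever $(\mathrm{jnd}^m_i\mathrm{res}^k_i(a))\cdot(\mathrm{jnd}^m_j\mathrm{res}^{\ell'}_j(b))\in I_m$ for all $0\le i\le k$, $0\le j\le\ell'$, $m=\max(i,j)$, then $a\in I_k$ or $b\in I_{\ell'}$. For an ideal $I\subseteq R_{k-1}$, $L(I)=(\mathrm{res}^k_{k-1})^{-1}(I)\subseteq R_k$; for an ideal $\mathscr I=[I_0,\dots,I_{k-1}]$ of $\Omega_{H_{k-1}}$, $\mathcal L\mathscr I=[I_0,\dots,I_{k-1},L(I_{k-1})]$. *)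

theory Defs
  imports "HOL-Computational_Algebra.Primes"
begin

text \<open>An element of R_k is represented by its coefficient function
  m :: nat => int, where m i is the coefficient of X_{k,i} (i <= k),
  and m i = 0 for i > k.\<close>

definition carR :: "nat \<Rightarrow> (nat \<Rightarrow> int) set" where
  "carR k = {m. \<forall>i>k. m i = 0}"

definition zeroR :: "nat \<Rightarrow> int" where
  "zeroR = (\<lambda>_. 0)"

text \<open>Multiplication in R_k: X_{k,i} X_{k,j} = p^(k - max i j) X_{k, min i j}.\<close>
definition mulR :: "int \<Rightarrow> nat \<Rightarrow> (nat \<Rightarrow> int) \<Rightarrow> (nat \<Rightarrow> int) \<Rightarrow> (nat \<Rightarrow> int)" where
  "mulR p k a b = (\<lambda>m. if m \<le> k then
      (\<Sum>i\<le>k. \<Sum>j\<le>k. if min i j = m then a i * b j * p ^ (k - max i j) else 0)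
    else 0)"

definition indR :: "nat \<Rightarrow> nat \<Rightarrow> (nat \<Rightarrow> int) \<Rightarrow> (nat \<Rightarrow> int)" where
  "indR l k a = (\<lambda>i. if i \<le> k then a i else 0)"

definition resR :: "int \<Rightarrow> nat \<Rightarrow> nat \<Rightarrow> (nat \<Rightarrow> int) \<Rightarrow> (nat \<Rightarrow> int)" where
  "resR p l k a = (\<lambda>i. if i < k then p ^ (l - k) * a i
     else if i = k then (\<Sum>s\<in>{k..l}. a s * p ^ (l - s))
     else 0)"

text \<open>jnd^l_k : R_k -> R_l (the quotients are exact integers; div is used).\<close>
definition jndR :: "int \<Rightarrow> nat \<Rightarrow> nat \<Rightarrow> (nat \<Rightarrow> int) \<Rightarrow> (nat \<Rightarrow> int)" where
  "jndR p l k m = (\<lambda>i.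
     if i = l then m k
     else if k \<le> i \<and> i < l then
       (m k ^ (nat p ^ (l - i)) - m k ^ (nat p ^ (l - i - 1))) div p ^ (l - i)
     else if i < k then
       ((\<Sum>s\<in>{i..k}. m s * p ^ (k - s)) ^ (nat p ^ (l - k))
        - (\<Sum>s\<in>{Suc i..k}. m s * p ^ (k - s)) ^ (nat p ^ (l - k))) div p ^ (l - i)
     else 0)"

definition is_idealR :: "int \<Rightarrow> nat \<Rightarrow> (nat \<Rightarrow> int) set \<Rightarrow> bool" where
  "is_idealR p k I \<longleftrightarrow> I \<subseteq> carR k \<and> zeroR \<in> I
     \<and> (\<forall>a\<in>I. \<forall>b\<in>I. (\<lambda>i. a i + b i) \<in> I \<and> (\<lambda>i. a i - b i) \<in> I)
     \<and> (\<forall>a\<in>I. \<forall>c\<in>carR k. mulR p k c a \<in> I)"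

definition is_ideal_seq :: "int \<Rightarrow> nat \<Rightarrow> (nat \<Rightarrow> int) set list \<Rightarrow> bool" where
  "is_ideal_seq p n I \<longleftrightarrow> length I = Suc n
     \<and> (\<forall>k\<le>n. is_idealR p k (I ! k))
     \<and> (\<forall>k. 1 \<le> k \<and> k \<le> n \<longrightarrow>
          (\<forall>a\<in>I ! (k - 1). indR k (k - 1) a \<in> I ! k)
        \<and> (\<forall>a\<in>I ! k. resR p k (k - 1) a \<in> I ! (k - 1))
        \<and> (\<forall>a\<in>I ! (k - 1). jndR p k (k - 1) a \<in> I ! k))"

definition is_prime_seq :: "int \<Rightarrow> nat \<Rightarrow> (nat \<Rightarrow> int) set list \<Rightarrow> bool" where
  "is_prime_seq p n I \<longleftrightarrow> is_ideal_seq p n I \<and> I ! 0 \<noteq> carR 0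
     \<and> (\<forall>l' k a b. l' \<le> k \<and> k \<le> n \<and> a \<in> carR k \<and> b \<in> carR l' \<and>
          (\<forall>i\<le>k. \<forall>j\<le>l'.
             mulR p (max i j) (jndR p (max i j) i (resR p k i a))
                              (jndR p (max i j) j (resR p l' j b)) \<in> I ! (max i j))
          \<longrightarrow> a \<in> I ! k \<or> b \<in> I ! l')"

definition Lop :: "int \<Rightarrow> nat \<Rightarrow> (nat \<Rightarrow> int) set \<Rightarrow> (nat \<Rightarrow> int) set" where
  "Lop p k I = {a \<in> carR k. resR p k (k - 1) a \<in> I}"

definition Lseq :: "int \<Rightarrow> (nat \<Rightarrow> int) set list \<Rightarrow> (nat \<Rightarrow> int) set list" where
  "Lseq p I = I @ [Lop p (length I) (last I)]"

definition Lpow :: "int \<Rightarrow> nat \<Rightarrow> nat \<Rightarrow> (nat \<Rightarrow> int) set list" where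
  "Lpow p k l = (Lseq p ^^ k) (replicate (Suc (l - k)) {zeroR})"

definition seq_subset :: "(nat \<Rightarrow> int) set list \<Rightarrow> (nat \<Rightarrow> int) set list \<Rightarrow> bool" where
  "seq_subset I J \<longleftrightarrow> length I = length J \<and> (\<forall>k<length I. I ! k \<subseteq> J ! k)"

definition seq_psubset :: "(nat \<Rightarrow> int) set list \<Rightarrow> (nat \<Rightarrow> int) set list \<Rightarrow> bool" where
  "seq_psubset I J \<longleftrightarrow> seq_subset I J \<and> I \<noteq> J"

end

theory Submission
  imports Defs "HOL-Number_Theory.Residues"
begin

text \<open>
  For \<open>s \<le> k\<close> the ghost component \<open>ghost p k a s = \<Sum>i\<in>{s..k}. a i * p ^ (k - i)\<close> counts
  the points of \<open>a\<close> fixed by the subgroup of order \<open>p ^ s\<close>; these maps are ring homomorphisms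
  \<open>R_k \<rightarrow> \<int>\<close> that jointly embed \<open>R_k\<close> into \<open>\<int>^(k+1)\<close>. Restriction forgets ghost components and
  \<open>jnd\<close> raises them to the \<open>p\<close>-th power, so for each \<open>t\<close> the ideals
  \<open>D_t(k) = {a. ghost p k a s = 0 for all s \<le> min t k}\<close> form a prime ideal of \<open>\<Omega>_{H_l}\<close>
  (primeness comes down to \<open>\<int>\<close> being a domain), and \<open>L^k(0) = [D_(l-k)(0), \<dots>, D_(l-k)(l)]\<close>.

  Conversely, let \<open>I\<close> be prime with \<open>I_0 = 0\<close> and \<open>t\<close> maximal with \<open>I_t = 0\<close>. Restriction gives
  \<open>I_j \<subseteq> D_t(j)\<close>. The ideal \<open>D_t(t+1)\<close> is generated by \<open>X_{t+1,t} - p\<close>, and primeness, tested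
  against an integer in \<open>R_0\<close>, puts this generator into \<open>I_{t+1}\<close>. Applying \<open>jnd\<close> to it gives
  elements of \<open>I_j\<close> with top coefficient \<open>p\<close>, which lift \<open>D_t(j) \<subseteq> I_j\<close> from \<open>j\<close> to \<open>j + 1\<close>.
\<close>

section \<open>Fermat congruences\<close>

lemma int_fermat_dvd:
  fixes p a :: int
  assumes "prime p"
  shows "p dvd a ^ nat p - a"
proof -
  define P where "P = nat p"
  have pP: "p = int P" and P: "prime P"
    using assms prime_gt_1_int[OF assms] by (auto simp: P_def)
  define b where "b = nat (a mod p)"
  have ab: "[a = int b] (mod p)"
    using prime_gt_1_int[OF assms] by (simp add: b_def cong_def)
  have "[b ^ P = b] (mod P)"
  proof (cases "P dvd b")
    case True
    then have "[b = 0] (mod P)"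
      by (simp add: cong_0_iff)
    then show ?thesis
      using P prime_gt_0_nat by (metis cong_pow cong_sym cong_trans power_0_left neq0_conv)
  next
    case False
    have "[b ^ (P - 1) * b = 1 * b] (mod P)"
      by (rule cong_scalar_right, rule fermat_theorem[OF P False])
    moreover have "b ^ (P - 1) * b = b ^ P"
      using P prime_gt_0_nat by (metis Suc_diff_1 power_Suc2)
    ultimately show ?thesis by simp
  qed
  then have "[int b ^ P = int b] (mod int P)"
    by (metis cong_int_iff of_nat_power)
  then have "[a ^ P = a] (mod p)"
    using ab pP by (metis cong_pow cong_sym cong_trans)
  then show ?thesis
    by (simp add: P_def cong_iff_dvd_diff)
qed

lemma prime_power_dvd_pow_diff:
  fixes p x y :: int
  assumes "prime p" and "n \<ge> 1" and "p ^ n dvd x - y"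
  shows "p ^ Suc n dvd x ^ nat p - y ^ nat p"
proof -
  define P where "P = nat p"
  have pP: "p = int P"
    using prime_gt_1_int[OF assms(1)] by (simp add: P_def)
  have "p dvd p ^ n"
    using assms(2) by (simp add: dvd_power)
  then have "p dvd x - y"
    using assms(3) dvd_trans by blast
  then have xy: "[x = y] (mod p)"
    by (simp add: cong_iff_dvd_diff)
  \<comment> \<open>\<open>x ^ p - y ^ p = (x - y) * \<Sum>i<p. y ^ (p - 1 - i) * x ^ i\<close>, and the sum is \<open>\<equiv> p * y ^ (p - 1) \<equiv> 0\<close>\<close>
  have "[(\<Sum>i<P. y ^ (P - Suc i) * x ^ i) = (\<Sum>i<P. y ^ (P - Suc i) * y ^ i)] (mod p)"
    by (rule cong_sum, rule cong_scalar_left, rule cong_pow, rule xy)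
  moreover have "(\<Sum>i<P. y ^ (P - Suc i) * y ^ i) = (\<Sum>i<P. y ^ (P - 1))"
  proof (rule sum.cong)
    fix i assume "i \<in> {..<P}"
    then have "P - Suc i + i = P - 1" by auto
    then show "y ^ (P - Suc i) * y ^ i = y ^ (P - 1)" by (metis power_add)
  qed simp
  moreover have "(\<Sum>i<P. y ^ (P - 1)) = p * y ^ (P - 1)"
    using pP by simp
  ultimately have "[(\<Sum>i<P. y ^ (P - Suc i) * x ^ i) = 0] (mod p)"
    by (metis cong_mult_self_left cong_trans)
  then have "p dvd (\<Sum>i<P. y ^ (P - Suc i) * x ^ i)"
    by (simp add: cong_0_iff)
  then have "p ^ n * p dvd (x - y) * (\<Sum>i<P. y ^ (P - Suc i) * x ^ i)"
    using assms(3) mult_dvd_mono by blast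
  then show ?thesis
    unfolding power_diff_sumr2 P_def by (simp add: mult.commute)
qed

section \<open>Ghost components\<close>

definition ghost :: "int \<Rightarrow> nat \<Rightarrow> (nat \<Rightarrow> int) \<Rightarrow> nat \<Rightarrow> int" where
  "ghost p k a s = (\<Sum>i\<in>{s..k}. a i * p ^ (k - i))"

definition ofintR :: "nat \<Rightarrow> int \<Rightarrow> nat \<Rightarrow> int" where
  "ofintR k c = (\<lambda>i. if i = k then c else 0)"

lemma ghost_top [simp]: "ghost p k a k = a k"
  by (simp add: ghost_def)

lemma ghost_Suc: "s < k \<Longrightarrow> ghost p k a s = a s * p ^ (k - s) + ghost p k a (Suc s)"
  unfolding ghost_def by (simp add: sum.atLeast_Suc_atMost)

lemma ghost_add: "ghost p k (\<lambda>i. a i + b i) s = ghost p k a s + ghost p k b s"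
  unfolding ghost_def by (simp add: sum.distrib distrib_right)

lemma ghost_diff: "ghost p k (\<lambda>i. a i - b i) s = ghost p k a s - ghost p k b s"
  unfolding ghost_def by (simp add: sum_subtractf left_diff_distrib)

lemma ghost_cmult: "ghost p k (\<lambda>i. c * a i) s = c * ghost p k a s"
  unfolding ghost_def by (simp add: sum_distrib_left mult.assoc)

lemma ghost_zeroR [simp]: "ghost p k zeroR s = 0"
  by (simp add: ghost_def zeroR_def)

lemma ghost_ofintR: "s \<le> k \<Longrightarrow> ghost p k (ofintR k c) s = c"
proof (induction s rule: inc_induct)
  case (step n)
  then show ?case by (simp add: ghost_Suc ofintR_def)
qed (simp add: ofintR_def)

lemma ghost_Suc_level: "s \<le> k \<Longrightarrow> ghost p (Suc k) a s = p * ghost p k a s + a (Suc k)"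
proof (induction s rule: inc_induct)
  case (step n)
  then have "Suc k - n = Suc (k - n)" by simp
  with step show ?case by (simp add: ghost_Suc algebra_simps)
qed (simp add: ghost_Suc mult.commute)

lemma ghost_inject:
  assumes "p \<noteq> 0" and "a \<in> carR k" and "b \<in> carR k"
    and "\<And>s. s \<le> k \<Longrightarrow> ghost p k a s = ghost p k b s"
  shows "a = b"
proof
  fix i
  consider "k < i" | "i = k" | "i < k" by linarith
  then show "a i = b i"
  proof cases
    case 1
    then show ?thesis using assms(2,3) by (simp add: carR_def)
  next
    case 2
    then show ?thesis using assms(4)[of k] by simp
  next
    case 3
    then have "a i * p ^ (k - i) = b i * p ^ (k - i)"
      using assms(4)[of i] assms(4)[of "Suc i"] by (simp add: ghost_Suc)
    then show ?thesis using assms(1) by simp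
  qed
qed

lemma ghost_resR: "s \<le> m \<Longrightarrow> m \<le> k \<Longrightarrow> ghost p m (resR p k m a) s = ghost p k a s"
proof (induction s rule: inc_induct)
  case (step n)
  have "p ^ (k - m) * p ^ (m - n) = p ^ (k - n)"
    using step by (simp flip: power_add)
  with step show ?case
    by (simp add: ghost_Suc resR_def mult.assoc mult.left_commute[of "p ^ (k - m)"])
qed (simp add: resR_def ghost_def)

lemma ghost_mulR:
  assumes "s \<le> k"
  shows "ghost p k (mulR p k c a) s = ghost p k c s * ghost p k a s"
proof -
  define F where "F i j = c i * a j * p ^ (k - max i j) * p ^ (k - min i j)" for i j
  let ?g = "\<lambda>f i. if s \<le> i then f i * p ^ (k - i) else 0"
  have "ghost p k (mulR p k c a) s
      = (\<Sum>m\<in>{s..k}. \<Sum>i\<le>k. \<Sum>j\<le>k. if min i j = m then F i j else 0)"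
    unfolding ghost_def mulR_def F_def
    by (rule sum.cong) (auto simp: sum_distrib_right intro!: sum.cong)
  also have "\<dots> = (\<Sum>i\<le>k. \<Sum>j\<le>k. \<Sum>m\<in>{s..k}. if min i j = m then F i j else 0)"
    by (rule trans[OF sum.swap], rule sum.cong[OF refl], rule sum.swap)
  also have "\<dots> = (\<Sum>i\<le>k. \<Sum>j\<le>k. ?g c i * ?g a j)"
  proof (intro sum.cong refl)
    fix i j assume "i \<in> {..k}" "j \<in> {..k}"
    then show "(\<Sum>m\<in>{s..k}. if min i j = m then F i j else 0) = ?g c i * ?g a j"
      by (cases "i \<le> j") (auto simp: sum.delta F_def max_def min_def mult_ac)
  qed
  also have "\<dots> = (\<Sum>i\<le>k. ?g c i) * (\<Sum>j\<le>k. ?g a j)"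
    by (simp add: sum_product)
  also have "\<dots> = ghost p k c s * ghost p k a s"
    unfolding ghost_def by (intro arg_cong2[where f = times] sum.mono_neutral_cong_right) auto
  finally show ?thesis .
qed

text \<open>The two divisibility lemmas above are what make the divisions in \<open>jndR\<close> exact.\<close>

lemma ghost_jndR:
  assumes "prime p" and "s \<le> k"
  shows "ghost p (Suc k) (jndR p (Suc k) k m) s = ghost p k m s ^ nat p"
  using assms(2)
proof (induction s rule: inc_induct)
  case base
  have "p dvd m k ^ nat p - m k"
    by (rule int_fermat_dvd[OF assms(1)])
  then show ?case
    by (simp add: ghost_Suc jndR_def)
next
  case (step n)
  let ?d = "ghost p k m n ^ nat p - ghost p k m (Suc n) ^ nat p"
  have "ghost p k m n - ghost p k m (Suc n) = m n * p ^ (k - n)"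
    using step by (simp add: ghost_Suc)
  then have "p ^ Suc (k - n) dvd ?d"
    using step by (intro prime_power_dvd_pow_diff[OF assms(1)]) auto
  moreover have "Suc k - n = Suc (k - n)"
    using step by simp
  moreover have "jndR p (Suc k) k m n = ?d div p ^ (Suc k - n)"
    using step by (simp add: jndR_def ghost_def)
  ultimately show ?case
    using step by (simp add: ghost_Suc)
qed

lemma zeroR_carR [simp]: "zeroR \<in> carR k"
  by (simp add: carR_def zeroR_def)

lemma mulR_carR: "mulR p k c a \<in> carR k"
  by (simp add: mulR_def carR_def)

lemma resR_carR: "resR p k m a \<in> carR m"
  by (simp add: resR_def carR_def)

lemma jndR_carR: "k \<le> l \<Longrightarrow> jndR p l k a \<in> carR l"
  by (simp add: jndR_def carR_def)

lemma cmult_carR: "a \<in> carR k \<Longrightarrow> (\<lambda>i. c * a i) \<in> carR k"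
  by (simp add: carR_def)

lemma mulR_zeroR_left [simp]: "mulR p k zeroR c = zeroR"
  by (rule ext) (simp add: mulR_def zeroR_def cong: if_cong)

lemma resR_top: "resR p l k a k = ghost p l a k"
  by (simp add: resR_def ghost_def)

lemma jndR_top: "jndR p l k a l = a k"
  by (simp add: jndR_def)

lemma resR_self: "a \<in> carR k \<Longrightarrow> resR p k k a = a"
  by (auto simp: resR_def carR_def)

lemma indR_self: "a \<in> carR k \<Longrightarrow> indR l k a = a"
  by (auto simp: indR_def carR_def)

lemma jndR_self:
  assumes "p \<noteq> 0" and "a \<in> carR l"
  shows "jndR p l l a = a"
proof
  fix i
  show "jndR p l l a i = a i"
  proof (cases "i < l")
    case True
    then have "ghost p l a i - ghost p l a (Suc i) = a i * p ^ (l - i)"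
      by (simp add: ghost_Suc)
    with True assms(1) show ?thesis
      by (simp add: jndR_def flip: ghost_def)
  qed (use assms(2) in \<open>auto simp: jndR_def carR_def\<close>)
qed

lemma mulR_ofintR:
  assumes "p \<noteq> 0" and "a \<in> carR k"
  shows "mulR p k (ofintR k c) a = (\<lambda>i. c * a i)"
  by (rule ghost_inject[OF assms(1) mulR_carR cmult_carR[OF assms(2)]])
    (simp add: ghost_mulR ghost_cmult ghost_ofintR)

lemma idealR_add: "is_idealR p k I \<Longrightarrow> a \<in> I \<Longrightarrow> b \<in> I \<Longrightarrow> (\<lambda>i. a i + b i) \<in> I"
  by (simp add: is_idealR_def)

lemma idealR_diff: "is_idealR p k I \<Longrightarrow> a \<in> I \<Longrightarrow> b \<in> I \<Longrightarrow> (\<lambda>i. a i - b i) \<in> I"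
  by (simp add: is_idealR_def)

lemma idealR_cmult:
  assumes "p \<noteq> 0" and "is_idealR p k I" and "a \<in> I"
  shows "(\<lambda>i. c * a i) \<in> I"
proof -
  have "a \<in> carR k" and "ofintR k c \<in> carR k"
    using assms(2,3) by (auto simp: is_idealR_def carR_def ofintR_def)
  moreover have "mulR p k (ofintR k c) a \<in> I"
    using assms(2,3) \<open>ofintR k c \<in> carR k\<close> by (simp add: is_idealR_def)
  ultimately show ?thesis
    using assms(1) by (simp add: mulR_ofintR)
qed

section \<open>The ideals \<open>L^k(0)\<close>\<close>

text \<open>\<open>ghost_ideal p t k\<close> is the \<open>k\<close>-th component of \<open>L^(l-t)(0)\<close>, for any \<open>l \<ge> t\<close>.\<close>

definition ghost_ideal :: "int \<Rightarrow> nat \<Rightarrow> nat \<Rightarrow> (nat \<Rightarrow> int) set" where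
  "ghost_ideal p t k = {a \<in> carR k. \<forall>s\<le>min t k. ghost p k a s = 0}"

definition ghost_ideals :: "int \<Rightarrow> nat \<Rightarrow> nat \<Rightarrow> (nat \<Rightarrow> int) set list" where
  "ghost_ideals p t l = map (ghost_ideal p t) [0..<Suc l]"

lemma length_ghost_ideals [simp]: "length (ghost_ideals p t l) = Suc l"
  by (simp add: ghost_ideals_def)

lemma nth_ghost_ideals [simp]: "k \<le> l \<Longrightarrow> ghost_ideals p t l ! k = ghost_ideal p t k"
  by (simp add: ghost_ideals_def del: upt_Suc)

lemma zeroR_ghost_ideal [simp]: "zeroR \<in> ghost_ideal p t k"
  by (simp add: ghost_ideal_def)

lemma ghost_ideal_trivial:
  assumes "p \<noteq> 0" and "k \<le> t"
  shows "ghost_ideal p t k = {zeroR}"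
  using assms by (auto simp: ghost_ideal_def intro: ghost_inject)

lemma ghost_ideal_antimono: "t' \<le> t \<Longrightarrow> ghost_ideal p t k \<subseteq> ghost_ideal p t' k"
  by (auto simp: ghost_ideal_def)

lemma is_idealR_ghost_ideal: "is_idealR p k (ghost_ideal p t k)"
  using mulR_carR[of p k] zeroR_carR[of k]
  by (auto simp: is_idealR_def ghost_ideal_def carR_def ghost_add ghost_diff ghost_mulR)

lemma indR_ghost_ideal:
  assumes "a \<in> ghost_ideal p t k"
  shows "indR (Suc k) k a \<in> ghost_ideal p t (Suc k)"
proof -
  have a: "a \<in> carR k" "a (Suc k) = 0"
    using assms by (auto simp: ghost_ideal_def carR_def)
  have "ghost p (Suc k) a s = 0" if "s \<le> min t (Suc k)" for s
  proof (cases "s \<le> k")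
    case False
    then show ?thesis using that a(2) by (simp add: le_Suc_eq)
  qed (use assms that a(2) in \<open>simp add: ghost_ideal_def ghost_Suc_level\<close>)
  with a show ?thesis
    by (auto simp: ghost_ideal_def indR_self carR_def)
qed

lemma resR_ghost_ideal:
  "m \<le> k \<Longrightarrow> a \<in> ghost_ideal p t k \<Longrightarrow> resR p k m a \<in> ghost_ideal p t m"
  by (auto simp: ghost_ideal_def ghost_resR resR_carR)

lemma resR_ghost_ideal_zeroR:
  assumes "p \<noteq> 0" and "a \<in> ghost_ideal p t k" and "m \<le> t" and "m \<le> k"
  shows "resR p k m a = zeroR"
  using assms by (intro ghost_inject[OF assms(1) resR_carR zeroR_carR])
    (auto simp: ghost_ideal_def ghost_resR)

lemma jndR_ghost_ideal:
  assumes "prime p" and "a \<in> ghost_ideal p t k"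
  shows "jndR p (Suc k) k a \<in> ghost_ideal p t (Suc k)"
proof -
  have "ghost p (Suc k) (jndR p (Suc k) k a) s = 0" if "s \<le> min t (Suc k)" for s
  proof (cases "s \<le> k")
    case True
    then show ?thesis
      using assms that prime_gt_1_int[OF assms(1)] by (simp add: ghost_jndR ghost_ideal_def)
  next
    case False
    then have "s = Suc k" and "ghost p k a k = 0"
      using assms(2) that by (auto simp: ghost_ideal_def)
    then show ?thesis by (simp add: jndR_top)
  qed
  then show ?thesis
    by (simp add: ghost_ideal_def jndR_carR)
qed

lemma Lop_ghost_ideal: "t \<le> k \<Longrightarrow> Lop p (Suc k) (ghost_ideal p t k) = ghost_ideal p t (Suc k)"
  by (auto simp: Lop_def ghost_ideal_def ghost_resR resR_carR min_def)

lemma Lseq_power_ghost_ideals: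
  "(Lseq p ^^ k) (map (ghost_ideal p t) [0..<Suc t]) = map (ghost_ideal p t) [0..<Suc (t + k)]"
proof (induction k)
  case (Suc k)
  then show ?case
    by (simp add: Lseq_def last_map Lop_ghost_ideal del: upt_Suc) simp
qed simp

lemma Lpow_eq_ghost_ideals:
  assumes "p \<noteq> 0" and "k \<le> l"
  shows "Lpow p k l = ghost_ideals p (l - k) l"
proof -
  have "replicate (Suc (l - k)) {zeroR} = map (ghost_ideal p (l - k)) [0..<Suc (l - k)]"
    using assms(1) by (intro nth_equalityI) (auto simp: ghost_ideal_trivial nth_Cons' simp del: upt_Suc)
  then show ?thesis
    using assms(2) Lseq_power_ghost_ideals[where t = "l - k"] by (simp add: Lpow_def ghost_ideals_def)
qed

lemma is_ideal_seq_ghost_ideals: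
  assumes "prime p"
  shows "is_ideal_seq p l (ghost_ideals p t l)"
  unfolding is_ideal_seq_def
proof (intro conjI allI impI ballI)
  fix k a assume k: "1 \<le> k \<and> k \<le> l"
  then obtain j where j: "k = Suc j" "Suc j \<le> l"
    by (cases k) auto
  then show "a \<in> ghost_ideals p t l ! (k - 1) \<Longrightarrow>
      indR k (k - 1) a \<in> ghost_ideals p t l ! k"
    and "a \<in> ghost_ideals p t l ! k \<Longrightarrow>
      resR p k (k - 1) a \<in> ghost_ideals p t l ! (k - 1)"
    and "a \<in> ghost_ideals p t l ! (k - 1) \<Longrightarrow>
      jndR p k (k - 1) a \<in> ghost_ideals p t l ! k"
    by (simp_all add: nth_ghost_ideals indR_ghost_ideal resR_ghost_ideal jndR_ghost_ideal[OF assms])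
qed (simp_all add: nth_ghost_ideals is_idealR_ghost_ideal)

lemma is_prime_seq_ghost_ideals:
  assumes "prime p"
  shows "is_prime_seq p l (ghost_ideals p t l)"
proof -
  let ?I = "ghost_ideals p t l"
  have p0: "p \<noteq> 0"
    using assms by auto
  have "ofintR 0 1 \<in> carR 0" and "ofintR 0 1 \<notin> ghost_ideal p t 0"
    by (auto simp: ofintR_def carR_def ghost_ideal_trivial[OF p0] zeroR_def fun_eq_iff)
  then have proper: "?I ! 0 \<noteq> carR 0"
    by auto
  have "a \<in> ?I ! k \<or> b \<in> ?I ! l'"
    if lk: "l' \<le> k" "k \<le> l" and ab: "a \<in> carR k" "b \<in> carR l'"
      and prod: "\<forall>i\<le>k. \<forall>j\<le>l'. mulR p (max i j) (jndR p (max i j) i (resR p k i a))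
                              (jndR p (max i j) j (resR p l' j b)) \<in> ?I ! (max i j)"
    for l' k a b
  proof (rule ccontr)
    assume "\<not> ?thesis"
    then obtain i j where i: "i \<le> min t k" "ghost p k a i \<noteq> 0"
      and j: "j \<le> min t l'" "ghost p l' b j \<noteq> 0"
      using that lk ab by (auto simp: ghost_ideal_def)
    let ?m = "max i j"
    have "mulR p ?m (jndR p ?m i (resR p k i a)) (jndR p ?m j (resR p l' j b)) \<in> ghost_ideal p t ?m"
      using prod i j lk by auto
    then have "ghost p ?m (mulR p ?m (jndR p ?m i (resR p k i a)) (jndR p ?m j (resR p l' j b))) ?m = 0"
      using i j by (auto simp: ghost_ideal_def simp del: ghost_top)
    \<comment> \<open>the top ghost component of \<open>jnd(res a) * jnd(res b)\<close>\<close>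
    then have "ghost p k a i * ghost p l' b j = 0"
      by (subst (asm) ghost_mulR[OF order_refl]) (simp add: jndR_top resR_top)
    with i j show False
      by simp
  qed
  then show ?thesis
    unfolding is_prime_seq_def using is_ideal_seq_ghost_ideals[OF assms] proper by blast
qed

section \<open>Prime ideals with vanishing bottom component\<close>

text \<open>The element \<open>X_{t+1,t} - p\<close> of \<open>R_{t+1}\<close>.\<close>

definition X_minus_p :: "int \<Rightarrow> nat \<Rightarrow> nat \<Rightarrow> int" where
  "X_minus_p p t = (\<lambda>i. if i = t then 1 else if i = Suc t then - p else 0)"

lemma X_minus_p_carR: "X_minus_p p t \<in> carR (Suc t)"
  by (simp add: X_minus_p_def carR_def)

lemma X_minus_p_ghost_ideal: "X_minus_p p t \<in> ghost_ideal p t (Suc t)"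
proof -
  have "ghost p (Suc t) (X_minus_p p t) s = 0" if "s \<le> t" for s
  proof -
    have "ghost p t (X_minus_p p t) s = ghost p t (ofintR t 1) s"
      unfolding ghost_def by (intro sum.cong) (auto simp: X_minus_p_def ofintR_def)
    with that show ?thesis
      by (simp add: ghost_Suc_level ghost_ofintR X_minus_p_def)
  qed
  then show ?thesis
    by (simp add: ghost_ideal_def X_minus_p_carR)
qed

lemma ghost_ideal_Suc_self_eq:
  assumes "p \<noteq> 0" and "b \<in> ghost_ideal p t (Suc t)"
  shows "b = (\<lambda>i. b t * X_minus_p p t i)"
proof (rule ghost_inject[OF assms(1)])
  show "b \<in> carR (Suc t)" and "(\<lambda>i. b t * X_minus_p p t i) \<in> carR (Suc t)"
    using assms(2) by (auto simp: ghost_ideal_def intro: cmult_carR X_minus_p_carR)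
  have "ghost p (Suc t) b t = 0"
    using assms(2) by (simp add: ghost_ideal_def)
  then have "b (Suc t) = - p * b t"
    by (simp add: ghost_Suc add_eq_0_iff mult.commute)
  then show "ghost p (Suc t) b s = ghost p (Suc t) (\<lambda>i. b t * X_minus_p p t i) s"
    if "s \<le> Suc t" for s
    using that assms(2) X_minus_p_ghost_ideal[of p t]
    by (cases "s = Suc t") (auto simp: ghost_ideal_def ghost_cmult X_minus_p_def)
qed

lemma mulR_ghost_ideal_Suc_self:
  assumes "p \<noteq> 0" and "a \<in> ghost_ideal p t (Suc t)"
  shows "mulR p (Suc t) a c = (\<lambda>i. c (Suc t) * a i)"
proof (rule ghost_inject[OF assms(1) mulR_carR cmult_carR])
  show "a \<in> carR (Suc t)"
    using assms(2) by (simp add: ghost_ideal_def)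
  show "ghost p (Suc t) (mulR p (Suc t) a c) s = ghost p (Suc t) (\<lambda>i. c (Suc t) * a i) s"
    if "s \<le> Suc t" for s
  proof (cases "s = Suc t")
    case False
    with that assms(2) show ?thesis
      by (auto simp: ghost_mulR ghost_cmult ghost_ideal_def simp del: ghost_top)
  qed (subst ghost_mulR, simp_all add: ghost_cmult)
qed

lemma ghost_ideal_Suc_reduce:
  assumes "p \<noteq> 0" and "t \<le> k"
    and "a \<in> ghost_ideal p t (Suc k)" and "y \<in> ghost_ideal p t (Suc k)" and "y (Suc k) = p"
  obtains c where "(\<lambda>i. a i - c * y i) \<in> ghost_ideal p t k"
proof
  define c where "c = - ghost p k a t"
  let ?a' = "\<lambda>i. a i - c * y i"
  have "ghost p (Suc k) a t = 0"
    using assms(2,3) by (simp add: ghost_ideal_def)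
  then have a_top: "a (Suc k) = p * c"
    using assms(2) by (simp add: c_def ghost_Suc_level add_eq_0_iff)
  have above: "a i = 0" "y i = 0" if "Suc k < i" for i
    using that assms(3,4) by (auto simp: ghost_ideal_def carR_def)
  have car: "?a' \<in> carR k"
    unfolding carR_def
  proof (intro CollectI allI impI)
    fix i assume "k < i"
    then consider "i = Suc k" | "Suc k < i"
      by linarith
    then show "?a' i = 0"
      using a_top assms(5) above by cases simp_all
  qed
  have "ghost p k ?a' s = 0" if "s \<le> min t k" for s
  proof -
    have "ghost p (Suc k) ?a' s = 0"
      using that assms(3,4) by (simp add: ghost_diff ghost_cmult ghost_ideal_def)
    moreover have "?a' (Suc k) = 0"
      using car by (simp add: carR_def)
    ultimately show ?thesis
      using that assms(1) by (simp add: ghost_Suc_level)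
  qed
  with car show "?a' \<in> ghost_ideal p t k"
    by (simp add: ghost_ideal_def)
qed

lemma is_ideal_seq_idealR: "is_ideal_seq p l I \<Longrightarrow> k \<le> l \<Longrightarrow> is_idealR p k (I ! k)"
  by (simp add: is_ideal_seq_def)

lemma is_ideal_seq_carR: "is_ideal_seq p l I \<Longrightarrow> k \<le> l \<Longrightarrow> I ! k \<subseteq> carR k"
  by (simp add: is_ideal_seq_def is_idealR_def)

lemma is_ideal_seq_zeroR: "is_ideal_seq p l I \<Longrightarrow> k \<le> l \<Longrightarrow> zeroR \<in> I ! k"
  by (simp add: is_ideal_seq_def is_idealR_def)

lemma is_ideal_seq_indR:
  "is_ideal_seq p l I \<Longrightarrow> Suc k \<le> l \<Longrightarrow> a \<in> I ! k \<Longrightarrow> indR (Suc k) k a \<in> I ! Suc k"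
  unfolding is_ideal_seq_def by (metis One_nat_def diff_Suc_1 le_add1 plus_1_eq_Suc)

lemma is_ideal_seq_resR:
  "is_ideal_seq p l I \<Longrightarrow> Suc k \<le> l \<Longrightarrow> a \<in> I ! Suc k \<Longrightarrow> resR p (Suc k) k a \<in> I ! k"
  unfolding is_ideal_seq_def by (metis One_nat_def diff_Suc_1 le_add1 plus_1_eq_Suc)

lemma is_ideal_seq_jndR:
  "is_ideal_seq p l I \<Longrightarrow> Suc k \<le> l \<Longrightarrow> a \<in> I ! k \<Longrightarrow> jndR p (Suc k) k a \<in> I ! Suc k"
  unfolding is_ideal_seq_def by (metis One_nat_def diff_Suc_1 le_add1 plus_1_eq_Suc)

lemma is_ideal_seq_mono:
  assumes "is_ideal_seq p l I" and "j \<le> k" and "k \<le> l"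
  shows "I ! j \<subseteq> I ! k"
  using assms(2,3)
proof (induction k rule: dec_induct)
  case (step k)
  have "a \<in> I ! Suc k" if "a \<in> I ! k" for a
    using that is_ideal_seq_indR[OF assms(1) step(4) that] is_ideal_seq_carR[OF assms(1), of k]
      step(4) by (auto simp: indR_self)
  with step show ?case
    by auto
qed simp

lemma is_ideal_seq_subset_ghost_ideal:
  assumes "is_ideal_seq p l I" and "I ! t = {zeroR}" and "t \<le> k" and "k \<le> l"
  shows "I ! k \<subseteq> ghost_ideal p t k"
  using assms(3,4)
proof (induction k rule: dec_induct)
  case (step k)
  have "I ! Suc k \<subseteq> Lop p (Suc k) (ghost_ideal p t k)"
    using step is_ideal_seq_resR[OF assms(1)] is_ideal_seq_carR[OF assms(1)] by (fastforce simp: Lop_def)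
  with step(1) show ?case
    by (simp add: Lop_ghost_ideal)
qed (use assms(2) in simp)

lemma is_prime_seqD:
  assumes "is_prime_seq p n I" and "l' \<le> k" and "k \<le> n" and "a \<in> carR k" and "b \<in> carR l'"
    and "\<forall>i\<le>k. \<forall>j\<le>l'. mulR p (max i j) (jndR p (max i j) i (resR p k i a))
                              (jndR p (max i j) j (resR p l' j b)) \<in> I ! max i j"
  shows "a \<in> I ! k \<or> b \<in> I ! l'"
  using assms unfolding is_prime_seq_def by blast

lemma is_prime_seq_X_minus_p:
  assumes "prime p" and prime_seq: "is_prime_seq p l I" and "I ! 0 = {zeroR}" and "Suc t \<le> l"
    and "I ! Suc t \<subseteq> ghost_ideal p t (Suc t)" and "I ! Suc t \<noteq> {zeroR}"
  shows "X_minus_p p t \<in> I ! Suc t"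
proof -
  have p0: "p \<noteq> 0"
    using assms(1) by auto
  have ideal_seq: "is_ideal_seq p l I"
    using prime_seq by (simp add: is_prime_seq_def)
  obtain b where b: "b \<in> I ! Suc t" "b \<noteq> zeroR"
    using assms(4,6) is_ideal_seq_zeroR[OF ideal_seq] by blast
  define n where "n = b t"
  have b_eq: "b = (\<lambda>i. n * X_minus_p p t i)"
    unfolding n_def using b(1) assms(5) by (intro ghost_ideal_Suc_self_eq[OF p0]) auto
  with b(2) have "n \<noteq> 0"
    by (auto simp: zeroR_def)
  \<comment> \<open>test primeness against \<open>X_{t+1,t} - p\<close> and the integer \<open>n\<close> in \<open>R_0\<close>\<close>
  let ?n = "ofintR 0 n"
  have n_notin: "?n \<notin> I ! 0"
    using assms(3) \<open>n \<noteq> 0\<close> by (auto simp: ofintR_def zeroR_def fun_eq_iff)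
  have n_car: "?n \<in> carR 0"
    by (simp add: ofintR_def carR_def)
  moreover have "\<forall>i\<le>Suc t. \<forall>j\<le>0. mulR p (max i j) (jndR p (max i j) i (resR p (Suc t) i (X_minus_p p t)))
      (jndR p (max i j) j (resR p 0 j ?n)) \<in> I ! max i j"
  proof (intro allI impI)
    fix i j :: nat
    assume i: "i \<le> Suc t" and "j \<le> 0"
    then have j: "max i j = i" "j = 0"
      by auto
    show "mulR p (max i j) (jndR p (max i j) i (resR p (Suc t) i (X_minus_p p t)))
      (jndR p (max i j) j (resR p 0 j ?n)) \<in> I ! max i j"
    proof (cases "i = Suc t")
      case True
      have "mulR p (Suc t) (X_minus_p p t) (jndR p (Suc t) 0 ?n) = b"
        by (subst b_eq, subst mulR_ghost_ideal_Suc_self[OF p0 X_minus_p_ghost_ideal])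
          (simp add: jndR_top ofintR_def)
      with True j b(1) show ?thesis
        by (simp add: resR_self[OF X_minus_p_carR] jndR_self[OF p0 X_minus_p_carR] resR_self[OF n_car])
    next
      case False
      with i have "resR p (Suc t) i (X_minus_p p t) = zeroR"
        by (intro resR_ghost_ideal_zeroR[OF p0 X_minus_p_ghost_ideal]) auto
      with False i j assms(4) show ?thesis
        by (simp add: jndR_self[OF p0] is_ideal_seq_zeroR[OF ideal_seq])
    qed
  qed
  ultimately show ?thesis
    using is_prime_seqD[OF prime_seq le0 assms(4) X_minus_p_carR] n_notin by blast
qed

lemma is_ideal_seq_top_p_element:
  assumes "prime p" and ideal_seq: "is_ideal_seq p l I" and "X_minus_p p t \<in> I ! Suc t"
    and "Suc t \<le> k" and "k \<le> l"
  obtains y where "y \<in> I ! k" and "y \<in> ghost_ideal p t k" and "y k = p"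
proof -
  have "\<exists>y\<in>I ! k. y \<in> ghost_ideal p t k \<and> y k = p"
    using assms(4,5)
  proof (induction k rule: dec_induct)
    case base
    let ?y = "\<lambda>i. zeroR i - X_minus_p p t i"
    have "?y \<in> I ! Suc t"
      using is_ideal_seq_zeroR[OF ideal_seq base] assms(3)
      by (rule idealR_diff[OF is_ideal_seq_idealR[OF ideal_seq base]])
    moreover have "?y \<in> ghost_ideal p t (Suc t)"
      by (rule idealR_diff[OF is_idealR_ghost_ideal zeroR_ghost_ideal X_minus_p_ghost_ideal])
    ultimately show ?case
      by (auto simp: zeroR_def X_minus_p_def)
  next
    case (step k)
    then obtain y where "y \<in> I ! k" "y \<in> ghost_ideal p t k" "y k = p"
      by auto
    with step(3,4) show ?case
      by (intro bexI[of _ "jndR p (Suc k) k y"])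
        (auto simp: jndR_top jndR_ghost_ideal[OF assms(1)] is_ideal_seq_jndR[OF ideal_seq])
  qed
  with that show ?thesis
    by blast
qed

lemma ghost_ideal_subset_is_ideal_seq:
  assumes "prime p" and ideal_seq: "is_ideal_seq p l I" and "X_minus_p p t \<in> I ! Suc t"
    and "Suc t \<le> l" and "k \<le> l"
  shows "ghost_ideal p t k \<subseteq> I ! k"
  using assms(5)
proof (induction k)
  case 0
  then show ?case
    using assms(1) is_ideal_seq_zeroR[OF ideal_seq] by (simp add: ghost_ideal_trivial)
next
  case (Suc k)
  have p0: "p \<noteq> 0"
    using assms(1) by auto
  show ?case
  proof (cases "Suc k \<le> t")
    case True
    then show ?thesis
      using Suc(2) is_ideal_seq_zeroR[OF ideal_seq] by (simp add: ghost_ideal_trivial[OF p0])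
  next
    case False
    obtain y where y: "y \<in> I ! Suc k" "y \<in> ghost_ideal p t (Suc k)" "y (Suc k) = p"
      using is_ideal_seq_top_p_element[OF assms(1-3)] False Suc(2) by (metis not_less_eq_eq)
    have ideal: "is_idealR p (Suc k) (I ! Suc k)"
      using is_ideal_seq_idealR[OF ideal_seq Suc(2)] .
    show ?thesis
    proof
      fix a assume a: "a \<in> ghost_ideal p t (Suc k)"
      obtain c where "(\<lambda>i. a i - c * y i) \<in> ghost_ideal p t k"
        using ghost_ideal_Suc_reduce[OF p0 _ a y(2,3)] False by (metis not_less_eq_eq)
      then have "(\<lambda>i. a i - c * y i) \<in> I ! Suc k"
        using Suc is_ideal_seq_mono[OF ideal_seq, of k "Suc k"] by auto
      moreover have "(\<lambda>i. c * y i) \<in> I ! Suc k"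
        using idealR_cmult[OF p0 ideal y(1)] .
      ultimately have "(\<lambda>i. (a i - c * y i) + c * y i) \<in> I ! Suc k"
        by (rule idealR_add[OF ideal])
      then show "a \<in> I ! Suc k"
        by simp
    qed
  qed
qed

lemma is_prime_seq_eq_ghost_ideals:
  assumes "prime p" and prime_seq: "is_prime_seq p l I" and "I ! 0 = {zeroR}"
  obtains t where "t \<le> l" and "I = ghost_ideals p t l"
proof -
  have p0: "p \<noteq> 0"
    using assms(1) by auto
  have ideal_seq: "is_ideal_seq p l I"
    using prime_seq by (simp add: is_prime_seq_def)
  define Z where "Z = {j. j \<le> l \<and> I ! j = {zeroR}}"
  define t where "t = Max Z"
  have "finite Z" and "0 \<in> Z"
    using assms(3) by (auto simp: Z_def)
  then have "t \<in> Z"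
    unfolding t_def by (intro Max_in) auto
  then have t: "t \<le> l" "I ! t = {zeroR}"
    by (auto simp: Z_def)
  have above: "I ! j \<noteq> {zeroR}" if "t < j" "j \<le> l" for j
  proof
    assume "I ! j = {zeroR}"
    with that(2) have "j \<le> t"
      unfolding t_def using \<open>finite Z\<close> by (simp add: Z_def)
    with that(1) show False
      by simp
  qed
  have "I ! j = ghost_ideal p t j" if "j \<le> l" for j
  proof (cases "j \<le> t")
    case True
    then show ?thesis
      using is_ideal_seq_mono[OF ideal_seq True t(1)] t(2) is_ideal_seq_zeroR[OF ideal_seq that]
      by (auto simp: ghost_ideal_trivial[OF p0])
  next
    case False
    then have "Suc t \<le> l"
      using that by simp
    then have "X_minus_p p t \<in> I ! Suc t"
      using is_prime_seq_X_minus_p[OF assms(1-3)] above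
        is_ideal_seq_subset_ghost_ideal[OF ideal_seq t(2)] by simp
    then show ?thesis
      using that False is_ideal_seq_subset_ghost_ideal[OF ideal_seq t(2)]
        ghost_ideal_subset_is_ideal_seq[OF assms(1) ideal_seq _ \<open>Suc t \<le> l\<close>]
      by (simp add: subset_antisym)
  qed
  with t(1) ideal_seq show ?thesis
    by (intro that[of t]) (auto simp: is_ideal_seq_def intro: nth_equalityI)
qed

lemma ghost_ideals_psubset:
  assumes "p \<noteq> 0" and "Suc t \<le> l"
  shows "seq_psubset (ghost_ideals p (Suc t) l) (ghost_ideals p t l)"
proof -
  have "X_minus_p p t t \<noteq> zeroR t"
    by (simp add: X_minus_p_def zeroR_def)
  then have "X_minus_p p t \<notin> ghost_ideal p (Suc t) (Suc t)"
    by (auto simp: ghost_ideal_trivial[OF assms(1)])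
  then have "ghost_ideals p (Suc t) l ! Suc t \<noteq> ghost_ideals p t l ! Suc t"
    using assms(2) X_minus_p_ghost_ideal by auto
  then show ?thesis
    by (auto simp: seq_psubset_def seq_subset_def ghost_ideal_antimono)
qed

lemma prime_seqs_with_zero_bottom:
  assumes "prime p"
  shows "{I. is_prime_seq p l I \<and> I ! 0 = {zeroR}} = (\<lambda>t. ghost_ideals p t l) ` {0..l}"
proof (intro subset_antisym subsetI)
  fix I assume "I \<in> {I. is_prime_seq p l I \<and> I ! 0 = {zeroR}}"
  then obtain t where "t \<le> l" and "I = ghost_ideals p t l"
    using is_prime_seq_eq_ghost_ideals[OF assms] by blast
  then show "I \<in> (\<lambda>t. ghost_ideals p t l) ` {0..l}"
    by auto
next
  fix I assume "I \<in> (\<lambda>t. ghost_ideals p t l) ` {0..l}"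
  moreover have "p \<noteq> 0"
    using assms by auto
  ultimately show "I \<in> {I. is_prime_seq p l I \<and> I ! 0 = {zeroR}}"
    by (auto simp: is_prime_seq_ghost_ideals[OF assms] ghost_ideal_trivial)
qed

lemma Lpow_image_eq_ghost_ideals:
  assumes "p \<noteq> 0"
  shows "(\<lambda>k. Lpow p k l) ` {0..l} = (\<lambda>t. ghost_ideals p t l) ` {0..l}"
proof -
  have "(\<lambda>k. Lpow p k l) ` {0..l} = (\<lambda>t. ghost_ideals p t l) ` (\<lambda>k. l - k) ` {0..l}"
    unfolding image_image by (intro image_cong refl) (simp add: Lpow_eq_ghost_ideals[OF assms])
  also have "(\<lambda>k. l - k) ` {0..l} = {0..l}"
  proof
    show "{0..l} \<subseteq> (\<lambda>k. l - k) ` {0..l}"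
    proof
      fix t assume "t \<in> {0..l}"
      then show "t \<in> (\<lambda>k. l - k) ` {0..l}"
        by (intro image_eqI[of _ _ "l - t"]) auto
    qed
  qed auto
  finally show ?thesis .
qed

theorem proposition6:
  fixes p :: int and r l :: nat
  assumes "prime p" and "l \<le> r"
  shows "{I. is_prime_seq p l I \<and> I ! 0 = {zeroR}} = (\<lambda>k. Lpow p k l) ` {0..l}
       \<and> (\<forall>k<l. seq_psubset (Lpow p k l) (Lpow p (Suc k) l))"
proof
  have p0: "p \<noteq> 0"
    using assms(1) by auto
  show "{I. is_prime_seq p l I \<and> I ! 0 = {zeroR}} = (\<lambda>k. Lpow p k l) ` {0..l}"
    by (simp add: prime_seqs_with_zero_bottom[OF assms(1)] Lpow_image_eq_ghost_ideals[OF p0])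
  show "\<forall>k<l. seq_psubset (Lpow p k l) (Lpow p (Suc k) l)"
  proof (intro allI impI)
    fix k assume "k < l"
    then have "Suc (l - Suc k) = l - k"
      by simp
    with ghost_ideals_psubset[OF p0, of "l - Suc k" l] \<open>k < l\<close>
    show "seq_psubset (Lpow p k l) (Lpow p (Suc k) l)"
      by (simp add: Lpow_eq_ghost_ideals[OF p0])
  qed
qed

end
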